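(* Let $\mathcal T\in\Sigma^n$ be a text. The permutations $\pi,\bar\pi$ defined as $\pi(i)=\mathrm{IPA}[i]$ and $\bar\pi(i)=n-\mathrm{IPA}[i]+1$ for $i\in[n]$ are order-preserving for $\mathcal T$. Furthermore, $|\mathtt{st\text{-}colex}^-|\le\bar r$ and $|\mathtt{st\text{-}colex}^+|\le\bar r$.
   Context: A text is a string $\mathcal T\in\Sigma^n$ over an integer alphabet whose last symbol $\mathcal T[n]=\$$ occurs only there and is smallest. $\mathrm{IPA}[i]$ is the rank of the prefix $\mathcal T[1,i]$ among all prefixes of $\mathcal T$ in colexicographic order. A permutation $\pi:[n]\to[n]$ is order-preserving for $\mathcal T$ if for all $i,j\in[n-1]$, $\pi(i)<\pi(j)$ and $\mathcal T[i,i+1]=\mathcal T[j,j+1]$ imply $\pi(i+1)<\pi(j+1)$. For $i\ne j$, $\mathrm{rlce}(i,j)$ is the length of the longest common prefix of $\mathcal T[i,n]$ and $\mathcal T[j,n]$; $\mathrm{LPF}_\pi[i]=0$ if $\pi(i)=1$, else $\mathrm{LPF}_\pi[i]=\max_{\pi(j)<\pi(i)}\mathrm{rlce}(j,i)$; $\mathrm{PDA}_\pi$ is the set $\{i+\mathrm{LPF}_\pi[i]:i\in[n]\}$ sorted colexicographically by the prefixes $\mathcal T[1,j]$. $\mathtt{st\text{-}colex}^-=\mathrm{PDA}_\pi$ and $\mathtt{st\text{-}colex}^+=\mathrm{PDA}_{\bar\pi}$. $\bar r$ is the number of maximal equal-letter runs of $\mathrm{coBWT}(\mathcal T)$, obtained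 by sorting all rotations of $\mathcal T$ colexicographically and concatenating their first characters. *)

theory Defs
  imports Main
begin

(* Texts are lists over the integer alphabet nat; positions are 1-based:
   T[i] = T ! (i-1), n = length T. *)

definition is_text :: "nat list \<Rightarrow> bool" where
  "is_text T \<longleftrightarrow> T \<noteq> [] \<and> (\<forall>i < length T - 1. T ! i > last T)"

definition colex_less :: "nat list \<Rightarrow> nat list \<Rightarrow> bool" where
  "colex_less xs ys \<longleftrightarrow> (rev xs, rev ys) \<in> lexord {(a, b). a < b}"

definition IPA :: "nat list \<Rightarrow> nat \<Rightarrow> nat" where
  "IPA T i = card {j \<in> {1..length T}. colex_less (take j T) (take i T)} + 1"

definition order_preserving :: "nat list \<Rightarrow> (nat \<Rightarrow> nat) \<Rightarrow> bool" where
  "order_preserving T \<pi> \<longleftrightarrow> bij_betw \<pi> {1..length T} {1..length T} \<and>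
     (\<forall>i \<in> {1..length T - 1}. \<forall>j \<in> {1..length T - 1}.
        \<pi> i < \<pi> j \<and> T ! (i - 1) = T ! (j - 1) \<and> T ! i = T ! j \<longrightarrow> \<pi> (i + 1) < \<pi> (j + 1))"

fun lcp :: "nat list \<Rightarrow> nat list \<Rightarrow> nat" where
  "lcp (x # xs) (y # ys) = (if x = y then Suc (lcp xs ys) else 0)"
| "lcp _ _ = 0"

definition rlce :: "nat list \<Rightarrow> nat \<Rightarrow> nat \<Rightarrow> nat" where
  "rlce T i j = lcp (drop (i - 1) T) (drop (j - 1) T)"

definition LPF :: "nat list \<Rightarrow> (nat \<Rightarrow> nat) \<Rightarrow> nat \<Rightarrow> nat" where
  "LPF T \<pi> i = (if \<pi> i = 1 then 0
     else Max {rlce T j i | j. j \<in> {1..length T} \<and> \<pi> j < \<pi> i})"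

(* PDA_pi as a set; its size |PDA_pi| is the cardinality of this set *)
definition PDA :: "nat list \<Rightarrow> (nat \<Rightarrow> nat) \<Rightarrow> nat set" where
  "PDA T \<pi> = {i + LPF T \<pi> i | i. i \<in> {1..length T}}"

definition st_colex_minus :: "nat list \<Rightarrow> nat set" where
  "st_colex_minus T = PDA T (IPA T)"

definition st_colex_plus :: "nat list \<Rightarrow> nat set" where
  "st_colex_plus T = PDA T (\<lambda>i. length T - IPA T i + 1)"

(* rotations T[i..n] T[1..i-1] = rotate (i-1) T; sorted colexicographically
   (rotations are pairwise distinct for a text); insertion sort w.r.t. colex_less *)
fun colex_insert :: "nat list \<Rightarrow> nat list list \<Rightarrow> nat list list" where
  "colex_insert x [] = [x]"
| "colex_insert x (y # ys) = (if colex_less x y then x # y # ys else y # colex_insert x ys)"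

definition colex_sort :: "nat list list \<Rightarrow> nat list list" where
  "colex_sort xs = foldr colex_insert xs []"

definition coBWT :: "nat list \<Rightarrow> nat list" where
  "coBWT T = map hd (colex_sort (map (\<lambda>k. rotate k T) [0..<length T]))"

definition rbar :: "nat list \<Rightarrow> nat" where
  "rbar T = length (remdups_adj (coBWT T))"

end

(*
  Both IPA and its reversal n + 1 - IPA rank the positions of the text so that
  equal letters occupy contiguous blocks of ranks and, inside a block, positions
  are ranked like their cyclic predecessors (the LF property of the BWT); order
  preservation is the non-cyclic half of the latter.

  For such a ranking, send each element p = i + LPF[i] of the PDA to the rank of
  the cyclic predecessor of p; the coBWT letter at that rank is T[p].  Suppose the
  letter at the preceding rank, belonging to position k, were T[p] as well.  With
  j the witness of LPF[i] = l, the LF property ranks j + l - 1 below p - 1, so k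
  lies between them; walking back l - 1 steps keeps k - l + 1 between j and i
  while preserving its agreement with T[i..p-1].  Then k - l + 1 is ranked below i
  and shares l + 1 letters with T[i..], contradicting the maximality of LPF[i].
  Hence the PDA injects into the run heads of the coBWT (of its reverse for the
  reversed ranking), and there are rbar of them.
*)
theory Submission
  imports Defs
begin

section \<open>Colexicographic order and IPA\<close>

lemma colex_less_iff_lexordp: "colex_less xs ys \<longleftrightarrow> ord_class.lexordp (rev xs) (rev ys)"
  by (simp add: colex_less_def lexordp_conv_lexord)

lemma colex_less_irrefl: "\<not> colex_less xs xs"
  by (simp add: colex_less_iff_lexordp lexordp_irreflexive')

lemma colex_less_trans: "colex_less xs ys \<Longrightarrow> colex_less ys zs \<Longrightarrow> colex_less xs zs"
  by (metis colex_less_iff_lexordp lexordp_trans)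

lemma colex_less_linear: "colex_less xs ys \<or> xs = ys \<or> colex_less ys xs"
  by (metis colex_less_iff_lexordp lexordp_linear rev_rev_ident)

lemma colex_less_snoc:
  "colex_less (xs @ [a]) (ys @ [b]) \<longleftrightarrow> a < b \<or> a = b \<and> colex_less xs ys"
  by (auto simp: colex_less_iff_lexordp)

lemma colex_less_Nil: "colex_less [] ys \<longleftrightarrow> ys \<noteq> []"
  by (simp add: colex_less_iff_lexordp)

lemma colex_less_asym: "colex_less xs ys \<Longrightarrow> \<not> colex_less ys xs"
  using colex_less_irrefl colex_less_trans by blast

lemma colex_less_iff_card_less:
  assumes "finite A" "y \<in> A" "z \<in> A"
  shows "colex_less y z \<longleftrightarrow> card {u \<in> A. colex_less u y} < card {u \<in> A. colex_less u z}"
proof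
  assume "colex_less y z"
  then have "{u \<in> A. colex_less u y} \<subset> {u \<in> A. colex_less u z}"
    using assms colex_less_trans colex_less_irrefl by blast
  then show "card {u \<in> A. colex_less u y} < card {u \<in> A. colex_less u z}"
    using assms(1) by (intro psubset_card_mono) auto
next
  assume less: "card {u \<in> A. colex_less u y} < card {u \<in> A. colex_less u z}"
  have "card {u \<in> A. colex_less u z} \<le> card {u \<in> A. colex_less u y}" if "colex_less z y \<or> z = y"
    using that assms(1) colex_less_trans by (intro card_mono) auto
  then show "colex_less y z" using less colex_less_linear by fastforce
qed

lemma take_eq_snoc_nth: "a \<in> {1..length T} \<Longrightarrow> take a T = take (a - 1) T @ [T ! (a - 1)]"
  by (metis Suc_diff_1 Suc_le_lessD atLeastAtMost_iff diff_less less_le_trans take_Suc_conv_app_nth zero_less_one)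

lemma take_inj: "a \<le> length T \<Longrightarrow> b \<le> length T \<Longrightarrow> take a T = take b T \<Longrightarrow> a = b"
  by (metis length_take min.absorb2)

lemma text_nth_gt_last: "is_text T \<Longrightarrow> x < length T - 1 \<Longrightarrow> T ! (length T - 1) < T ! x"
  unfolding is_text_def by (metis last_conv_nth)

definition cyc_pred :: "nat \<Rightarrow> nat \<Rightarrow> nat" where
  "cyc_pred n p = (if p = 1 then n else p - 1)"

lemma cyc_pred_in: "p \<in> {1..n} \<Longrightarrow> cyc_pred n p \<in> {1..n}"
  by (auto simp: cyc_pred_def)

lemma cyc_pred_eq_iff: "p \<in> {1..n} \<Longrightarrow> q \<in> {1..n} \<Longrightarrow> cyc_pred n p = cyc_pred n q \<longleftrightarrow> p = q"
  by (auto simp: cyc_pred_def)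

lemma cyc_pred_Suc_mod: "k \<in> {1..n} \<Longrightarrow> cyc_pred n (k mod n + 1) = k"
  by (cases "k = n") (auto simp: cyc_pred_def)

lemma cyc_pred_mod: "p \<in> {1..n} \<Longrightarrow> cyc_pred n p mod n = p - 1"
  by (auto simp: cyc_pred_def)

lemma inj_on_take: "inj_on (\<lambda>j. take j T) {1..length T}"
  by (intro inj_onI take_inj) auto

lemma IPA_eq_card: "IPA T a = card {u \<in> (\<lambda>j. take j T) ` {1..length T}. colex_less u (take a T)} + 1"
proof -
  have "{u \<in> (\<lambda>j. take j T) ` {1..length T}. colex_less u (take a T)}
      = (\<lambda>j. take j T) ` {j \<in> {1..length T}. colex_less (take j T) (take a T)}"
    by blast
  also have "card \<dots> = card {j \<in> {1..length T}. colex_less (take j T) (take a T)}"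
    by (rule card_image[OF inj_on_subset[OF inj_on_take]]) blast
  finally show ?thesis by (simp add: IPA_def)
qed

lemma IPA_less_iff:
  assumes "a \<in> {1..length T}" "b \<in> {1..length T}"
  shows "IPA T a < IPA T b \<longleftrightarrow> colex_less (take a T) (take b T)"
  using colex_less_iff_card_less[of "(\<lambda>j. take j T) ` {1..length T}"] assms
  by (simp add: IPA_eq_card)

lemma IPA_in:
  assumes a: "a \<in> {1..length T}"
  shows "IPA T a \<in> {1..length T}"
proof -
  have "{j \<in> {1..length T}. colex_less (take j T) (take a T)} \<subseteq> {1..length T} - {a}"
    using colex_less_irrefl by auto
  then have "card {j \<in> {1..length T}. colex_less (take j T) (take a T)} \<le> length T - 1"
    using a card_mono[of "{1..length T} - {a}"] by fastforce
  then show ?thesis using a by (simp add: IPA_def; linarith)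
qed

lemma inj_on_IPA: "inj_on (IPA T) {1..length T}"
  by (rule inj_onI) (metis IPA_less_iff colex_less_linear less_irrefl take_inj atLeastAtMost_iff)

lemma bij_betw_IPA: "bij_betw (IPA T) {1..length T} {1..length T}"
  using inj_on_IPA IPA_in endo_inj_surj unfolding bij_betw_def by (metis finite_atLeastAtMost image_subsetI)

lemma IPA_less_iff_letter:
  assumes "a \<in> {1..length T}" "b \<in> {1..length T}" "T ! (a - 1) \<noteq> T ! (b - 1)"
  shows "IPA T a < IPA T b \<longleftrightarrow> T ! (a - 1) < T ! (b - 1)"
  using assms by (simp add: IPA_less_iff take_eq_snoc_nth[of a] take_eq_snoc_nth[of b] colex_less_snoc)

lemma IPA_less_iff_pred:
  assumes a: "a \<in> {2..length T}" and b: "b \<in> {2..length T}" and "T ! (a - 1) = T ! (b - 1)"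
  shows "IPA T a < IPA T b \<longleftrightarrow> IPA T (a - 1) < IPA T (b - 1)"
proof -
  have "IPA T a < IPA T b \<longleftrightarrow> colex_less (take (a - 1) T) (take (b - 1) T)"
    using assms by (simp add: IPA_less_iff take_eq_snoc_nth[of a] take_eq_snoc_nth[of b] colex_less_snoc)
  also have "\<dots> \<longleftrightarrow> IPA T (a - 1) < IPA T (b - 1)"
    using a b by (intro IPA_less_iff[symmetric]) auto
  finally show ?thesis .
qed

lemma IPA_first_less:
  assumes b: "b \<in> {2..length T}" and "T ! 0 = T ! (b - 1)"
  shows "IPA T 1 < IPA T b"
proof -
  have "colex_less ([] @ [T ! 0]) (take (b - 1) T @ [T ! (b - 1)])"
    unfolding colex_less_snoc using assms by (auto simp: colex_less_Nil)
  then show ?thesis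
    using b take_eq_snoc_nth[of 1 T] take_eq_snoc_nth[of b T] by (simp add: IPA_less_iff)
qed

lemma IPA_last:
  assumes "is_text T"
  shows "IPA T (length T) = 1"
proof -
  have "\<not> colex_less (take j T) (take (length T) T)" if j: "j \<in> {1..length T}" for j
  proof (cases "j = length T")
    case False
    then have "T ! (length T - 1) < T ! (j - 1)" using j by (intro text_nth_gt_last assms) auto
    moreover have "length T \<in> {1..length T}" using j by simp
    ultimately show ?thesis
      using j take_eq_snoc_nth[of j T] take_eq_snoc_nth[of "length T" T] colex_less_snoc
      by (metis not_less_iff_gr_or_eq)
  qed (simp add: colex_less_irrefl)
  then show ?thesis unfolding IPA_def by auto
qed

lemma IPA_last_less:
  assumes "is_text T" "c \<in> {1..length T}" "c \<noteq> length T"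
  shows "IPA T (length T) < IPA T c"
proof -
  have "IPA T c \<noteq> IPA T (length T)"
    using assms inj_on_eq_iff[OF inj_on_IPA[of T], of c "length T"] by auto
  then show ?thesis using IPA_last[OF assms(1)] IPA_in[OF assms(2)] by simp
qed

lemma IPA_less_iff_cyc_pred:
  assumes T_text: "is_text T" and a: "a \<in> {1..length T}" and b: "b \<in> {1..length T}"
    and same: "T ! (a - 1) = T ! (b - 1)"
  shows "IPA T a < IPA T b \<longleftrightarrow> IPA T (cyc_pred (length T) a) < IPA T (cyc_pred (length T) b)"
proof -
  consider "a = b" | "a \<noteq> b" "a = 1" | "a \<noteq> b" "b = 1" | "a \<in> {2..length T}" "b \<in> {2..length T}"
    using a b by fastforce
  then show ?thesis
  proof cases
    case 2
    then have "b - 1 \<in> {1..length T}" "b - 1 \<noteq> length T" using b by auto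
    then show ?thesis
      using 2 IPA_first_less[of b T] IPA_last_less[OF T_text, of "b - 1"] same b by (simp add: cyc_pred_def)
  next
    case 3
    then have "a - 1 \<in> {1..length T}" "a - 1 \<noteq> length T" using a by auto
    then show ?thesis
      using 3 IPA_first_less[of a T] IPA_last_less[OF T_text, of "a - 1"] same a by (simp add: cyc_pred_def)
  next
    case 4
    then show ?thesis using IPA_less_iff_pred[OF _ _ same] by (simp add: cyc_pred_def)
  qed simp
qed

lemma IPA_letter_between:
  assumes a: "a \<in> {1..length T}" and b: "b \<in> {1..length T}" and x: "x \<in> {1..length T}"
    and "IPA T a \<le> IPA T x" "IPA T x \<le> IPA T b" and same: "T ! (a - 1) = T ! (b - 1)"
  shows "T ! (x - 1) = T ! (a - 1)"
proof (rule ccontr)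
  assume differ: "T ! (x - 1) \<noteq> T ! (a - 1)"
  then have "IPA T a \<noteq> IPA T x" "IPA T x \<noteq> IPA T b"
    using a b x same inj_on_eq_iff[OF inj_on_IPA] by metis+
  then have "IPA T a < IPA T x" "IPA T x < IPA T b"
    using \<open>IPA T a \<le> IPA T x\<close> \<open>IPA T x \<le> IPA T b\<close> by auto
  then show False
    using IPA_less_iff_letter[OF a x] IPA_less_iff_letter[OF x b] differ same by auto
qed

section \<open>Sorted rotations and the coBWT\<close>

lemma colex_insert_eq_insort_key:
  assumes "x \<in> S" "set ys \<subseteq> S" "x \<notin> set ys"
    and "\<And>y z. y \<in> S \<Longrightarrow> z \<in> S \<Longrightarrow> colex_less y z \<longleftrightarrow> f y < f z" and "inj_on f S"
  shows "colex_insert x ys = insort_key f x ys"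
  using assms(1-3)
proof (induction ys)
  case (Cons y ys)
  have "f x \<noteq> f y" using \<open>inj_on f S\<close> Cons.prems unfolding inj_on_def by auto
  then have "colex_less x y \<longleftrightarrow> f x \<le> f y" using assms(4) Cons.prems by auto
  then show ?case using Cons by auto
qed simp

lemma colex_sort_eq_sort_key:
  assumes "distinct xs" "set xs \<subseteq> S"
    and "\<And>y z. y \<in> S \<Longrightarrow> z \<in> S \<Longrightarrow> colex_less y z \<longleftrightarrow> f y < f z" and "inj_on f S"
  shows "colex_sort xs = sort_key f xs"
  using assms(1,2)
proof (induction xs)
  case (Cons x xs)
  then have "colex_sort (x # xs) = colex_insert x (sort_key f xs)" by (simp add: colex_sort_def)
  also have "\<dots> = insort_key f x (sort_key f xs)"
    using Cons.prems by (intro colex_insert_eq_insort_key[OF _ _ _ assms(3,4)]) auto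
  finally show ?case by simp
qed (simp add: colex_sort_def)

lemma colex_sort_nth_rank:
  assumes "distinct xs" "x \<in> set xs"
  shows "colex_sort xs ! card {y \<in> set xs. colex_less y x} = x"
proof -
  define rank where "rank z = card {y \<in> set xs. colex_less y z}" for z
  have less_iff: "colex_less y z \<longleftrightarrow> rank y < rank z" if "y \<in> set xs" "z \<in> set xs" for y z
    using colex_less_iff_card_less[OF finite_set that] by (simp add: rank_def)
  have inj: "inj_on rank (set xs)"
    by (rule inj_onI) (metis less_iff colex_less_linear less_irrefl)
  have "rank ` set xs \<subseteq> {0..<length xs}"
  proof
    fix r assume "r \<in> rank ` set xs"
    then obtain z where "z \<in> set xs" "r = rank z" by blast
    then have "{y \<in> set xs. colex_less y z} \<subset> set xs" using colex_less_irrefl by blast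
    then have "rank z < card (set xs)" unfolding rank_def by (intro psubset_card_mono) auto
    then show "r \<in> {0..<length xs}" using \<open>r = rank z\<close> distinct_card[OF assms(1)] by simp
  qed
  then have ranks: "rank ` set xs = {0..<length xs}"
    using card_image[OF inj] distinct_card[OF assms(1)] by (intro card_subset_eq) auto
  define L where "L = sort_key rank xs"
  have ranks_L: "map rank L = [0..<length xs]"
    unfolding L_def using assms(1) inj ranks
    by (intro sorted_distinct_set_unique) (auto simp: distinct_map)
  have "x \<in> set L" using assms(2) by (simp add: L_def)
  then obtain i where i: "i < length L" "L ! i = x" by (auto simp: in_set_conv_nth)
  then have "rank x = i"
    using arg_cong[OF ranks_L, of "\<lambda>ys. ys ! i"] by (simp add: L_def)
  then have "L ! rank x = x" using i by simp
  moreover have "colex_sort xs = L"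
    unfolding L_def using assms(1) less_iff inj by (intro colex_sort_eq_sort_key) auto
  ultimately show ?thesis by (simp add: rank_def)
qed

lemma lexordp_append_sep:
  fixes d :: "'a :: linorder"
  assumes "\<forall>z\<in>set u. d < z" "\<forall>z\<in>set v. d < z" "u \<noteq> v"
  shows "ord_class.lexordp (u @ d # w) (v @ d # w') \<longleftrightarrow> ord_class.lexordp u v"
  using assms
proof (induction u arbitrary: v)
  case Nil
  then show ?case by (cases v) auto
next
  case (Cons x u)
  then show ?case by (cases v) auto
qed

lemma rev_rotate_conv:
  assumes "0 < k" "k < length T"
  shows "rev (rotate k T) = rev (take k T) @ last T # rev (butlast (drop k T))"
proof -
  have "drop k T \<noteq> []" using assms by simp
  then have "drop k T = butlast (drop k T) @ [last T]"
    using assms by (metis append_butlast_last_id last_drop)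
  then show ?thesis using assms by (metis rotate_drop_take mod_less rev_append rev.simps(2) append.assoc append_Cons append_Nil)
qed

lemma colex_less_text_snoc:
  assumes "is_text T" "k < length T - 1"
  shows "colex_less T (ys @ [T ! k])"
proof -
  have "T = take (length T - 1) T @ [T ! (length T - 1)]"
    using assms(1) take_eq_snoc_nth[of "length T" T] by (simp add: is_text_def Suc_le_eq)
  then show ?thesis using text_nth_gt_last[OF assms] colex_less_snoc by metis
qed

lemma colex_less_text_take_rotate:
  assumes "is_text T" "k \<in> {1..<length T}"
  shows "colex_less T (take k T)" "colex_less T (rotate k T)"
proof -
  have "take k T = take (k - 1) T @ [T ! (k - 1)]" using assms take_eq_snoc_nth[of k T] by auto
  moreover have "rotate k T = (drop k T @ take (k - 1) T) @ [T ! (k - 1)]"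
    using assms calculation by (simp add: rotate_drop_take)
  moreover have "k - 1 < length T - 1" using assms by auto
  ultimately show "colex_less T (take k T)" "colex_less T (rotate k T)"
    using colex_less_text_snoc[OF assms(1)] by metis+
qed

(* rotate (i mod n) T is the rotation ending with T[1..i]; the unique sentinel settles
   every comparison of two rotations before it wraps around. *)
lemma colex_rotate_iff:
  assumes T_text: "is_text T" and i: "i \<in> {1..length T}" and j: "j \<in> {1..length T}"
  shows "colex_less (rotate (i mod length T) T) (rotate (j mod length T) T)
    \<longleftrightarrow> colex_less (take i T) (take j T)"
proof -
  let ?n = "length T"
  note text_less = colex_less_text_take_rotate[OF T_text]
  consider "i = ?n" | "j = ?n" | "i \<in> {1..<?n}" "j \<in> {1..<?n}" using i j by fastforce
  then show ?thesis
  proof cases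
    case 1
    then show ?thesis using text_less[of j] j colex_less_irrefl by (cases "j = ?n") auto
  next
    case 2
    then show ?thesis using text_less[of i] i colex_less_asym by (cases "i = ?n") auto
  next
    case 3
    show ?thesis
    proof (cases "i = j")
      case False
      have rev_rot: "rev (rotate (k mod ?n) T) = rev (take k T) @ last T # rev (butlast (drop k T))"
        if "k \<in> {1..<?n}" for k
        using that rev_rotate_conv[of k T] by simp
      have greater: "\<forall>z\<in>set (rev (take k T)). last T < z" if "k \<in> {1..<?n}" for k
        using that T_text by (auto simp: in_set_conv_nth is_text_def)
      have "take i T \<noteq> take j T" using 3 False take_inj[of i T j] by auto
      then have differ: "rev (take i T) \<noteq> rev (take j T)" by simp
      have "colex_less (rotate (i mod ?n) T) (rotate (j mod ?n) T)
        \<longleftrightarrow> ord_class.lexordp (rev (take i T) @ last T # rev (butlast (drop i T)))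
            (rev (take j T) @ last T # rev (butlast (drop j T)))"
        by (simp only: colex_less_iff_lexordp rev_rot[OF 3(1)] rev_rot[OF 3(2)])
      also have "\<dots> \<longleftrightarrow> ord_class.lexordp (rev (take i T)) (rev (take j T))"
        by (rule lexordp_append_sep[OF greater[OF 3(1)] greater[OF 3(2)] differ])
      finally show ?thesis by (simp add: colex_less_iff_lexordp)
    qed (simp add: colex_less_irrefl)
  qed
qed

lemma image_mod_atLeastAtMost: "(\<lambda>i. i mod n) ` {1..n} = {0..<n::nat}"
proof
  show "{0..<n} \<subseteq> (\<lambda>i. i mod n) ` {1..n}"
    by (rule subsetI, rule_tac x = "if x = 0 then n else x" in image_eqI) auto
qed (auto intro!: mod_less_divisor)

lemma inj_on_rotate_mod:
  assumes "is_text T"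
  shows "inj_on (\<lambda>i. rotate (i mod length T) T) {1..length T}"
proof (rule inj_onI)
  fix a b assume a: "a \<in> {1..length T}" and b: "b \<in> {1..length T}"
    and "rotate (a mod length T) T = rotate (b mod length T) T"
  then have "\<not> colex_less (take a T) (take b T)" "\<not> colex_less (take b T) (take a T)"
    using colex_rotate_iff[OF assms] colex_less_irrefl by metis+
  then have "take a T = take b T" using colex_less_linear by blast
  then show "a = b" using a b by (intro take_inj) auto
qed

lemma length_colex_sort: "length (colex_sort xs) = length xs"
proof -
  have "length (colex_insert x ys) = Suc (length ys)" for x ys
    by (induction ys) auto
  then show ?thesis by (induction xs) (simp_all add: colex_sort_def)
qed

lemma length_coBWT: "length (coBWT T) = length T"
  by (simp add: coBWT_def length_colex_sort)

lemma coBWT_nth_IPA: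
  assumes T_text: "is_text T" and j: "j \<in> {1..length T}"
  shows "coBWT T ! (IPA T j - 1) = T ! (j mod length T)"
proof -
  let ?n = "length T"
  let ?rot = "\<lambda>i. rotate (i mod ?n) T"
  let ?rots = "map (\<lambda>k. rotate k T) [0..<?n]"
  have rots: "set ?rots = ?rot ` {1..?n}"
    by (simp flip: image_mod_atLeastAtMost add: image_image)
  have "inj_on ?rot {1..?n}" by (rule inj_on_rotate_mod[OF T_text])
  then have "card (set ?rots) = length ?rots" unfolding rots by (simp add: card_image)
  then have "distinct ?rots" by (rule card_distinct)
  have "{y \<in> set ?rots. colex_less y (?rot j)} = ?rot ` {i \<in> {1..?n}. colex_less (take i T) (take j T)}"
    unfolding rots using colex_rotate_iff[OF T_text _ j] by auto
  then have "card {y \<in> set ?rots. colex_less y (?rot j)}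
    = card (?rot ` {i \<in> {1..?n}. colex_less (take i T) (take j T)})" by simp
  also have "\<dots> = card {i \<in> {1..?n}. colex_less (take i T) (take j T)}"
    by (rule card_image[OF inj_on_subset[OF \<open>inj_on ?rot {1..?n}\<close>]]) blast
  finally have "card {y \<in> set ?rots. colex_less y (?rot j)} = IPA T j - 1"
    by (simp add: IPA_def)
  then have "colex_sort ?rots ! (IPA T j - 1) = ?rot j"
    using colex_sort_nth_rank[OF \<open>distinct ?rots\<close>] j rots by force
  moreover have "IPA T j - 1 < ?n" "T \<noteq> []" using IPA_in[OF j] by auto
  ultimately show ?thesis by (simp add: coBWT_def length_colex_sort hd_rotate_conv_nth)
qed

definition run_heads :: "'a list \<Rightarrow> nat set" where
  "run_heads xs = {i. i < length xs \<and> (i = 0 \<or> xs ! (i - 1) \<noteq> xs ! i)}"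

lemma run_heads_Cons_Cons:
  "run_heads (x # y # xs) = insert 0 (Suc ` (run_heads (y # xs) - (if x = y then {0} else {})))"
proof (rule set_eqI)
  fix i
  show "i \<in> run_heads (x # y # xs)
    \<longleftrightarrow> i \<in> insert 0 (Suc ` (run_heads (y # xs) - (if x = y then {0} else {})))"
    by (cases i; cases "i - 1") (auto simp: run_heads_def inj_image_mem_iff)
qed

lemma card_run_heads: "card (run_heads xs) = length (remdups_adj xs)"
proof (induction xs rule: remdups_adj.induct)
  case (2 x)
  have "run_heads [x] = {0}" by (auto simp: run_heads_def)
  then show ?case by simp
next
  case (3 x y xs)
  have "0 \<in> run_heads (y # xs)" "finite (run_heads (y # xs))"
    by (auto simp: run_heads_def)
  then show ?case
    using "3.IH" by (simp add: run_heads_Cons_Cons card_image card_insert_if card_Diff_singleton)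
qed (simp add: run_heads_def)

section \<open>Longest previous factors\<close>

lemma nth_eq_if_less_lcp: "t < lcp xs ys \<Longrightarrow> t < length xs \<and> t < length ys \<and> xs ! t = ys ! t"
proof (induction xs ys arbitrary: t rule: lcp.induct)
  case (1 x xs y ys)
  then show ?case by (cases t) (auto split: if_splits)
qed auto

lemma le_lcp:
  "m \<le> length xs \<Longrightarrow> m \<le> length ys \<Longrightarrow> \<forall>t<m. xs ! t = ys ! t \<Longrightarrow> m \<le> lcp xs ys"
proof (induction xs ys arbitrary: m rule: lcp.induct)
  case (1 x xs y ys)
  show ?case
  proof (cases m)
    case (Suc m')
    have "x = y" using "1.prems"(3) Suc by (metis nth_Cons_0 zero_less_Suc)
    moreover have "m' \<le> lcp xs ys"
    proof (rule "1.IH"[OF \<open>x = y\<close>])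
      show "m' \<le> length xs" "m' \<le> length ys" using "1.prems"(1,2) Suc by auto
      show "\<forall>t<m'. xs ! t = ys ! t" using "1.prems"(3) Suc by (metis Suc_less_eq nth_Cons_Suc)
    qed
    ultimately show ?thesis using Suc by simp
  qed simp
qed auto

lemma nth_eq_if_less_rlce:
  assumes "j \<ge> 1" "i \<ge> 1" "t < rlce T j i"
  shows "j + t \<le> length T \<and> i + t \<le> length T \<and> T ! (j - 1 + t) = T ! (i - 1 + t)"
  using nth_eq_if_less_lcp[of t "drop (j - 1) T" "drop (i - 1) T"] assms unfolding rlce_def by auto

lemma le_rlce:
  assumes "j \<ge> 1" "i \<ge> 1" "j + m \<le> length T + 1" "i + m \<le> length T + 1"
    "\<forall>t<m. T ! (j - 1 + t) = T ! (i - 1 + t)"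
  shows "m \<le> rlce T j i"
  unfolding rlce_def using assms by (intro le_lcp) auto

lemma rlce_bound:
  assumes "is_text T" "j \<in> {1..length T}" "i \<in> {1..length T}" "j \<noteq> i"
  shows "i + rlce T j i \<le> length T"
proof (rule ccontr)
  assume "\<not> ?thesis"
  then have "length T - i < rlce T j i" using assms(3) by auto
  from nth_eq_if_less_rlce[OF _ _ this] assms
  have "j < i" "T ! (j - 1 + (length T - i)) = T ! (length T - 1)" by auto
  moreover have "j - 1 + (length T - i) < length T - 1" using \<open>j < i\<close> assms(2,3) by auto
  ultimately show False using text_nth_gt_last[OF assms(1)] by (metis less_irrefl)
qed

lemma rlce_le_LPF:
  assumes "bij_betw \<sigma> {1..length T} {1..length T}" "j \<in> {1..length T}" "\<sigma> j < \<sigma> i"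
  shows "rlce T j i \<le> LPF T \<sigma> i"
proof -
  have "\<sigma> i \<noteq> 1" using assms bij_betwE by fastforce
  moreover have "rlce T j i \<in> {rlce T j i | j. j \<in> {1..length T} \<and> \<sigma> j < \<sigma> i}" using assms by auto
  ultimately show ?thesis unfolding LPF_def by simp
qed

lemma LPF_attained:
  assumes "bij_betw \<sigma> {1..length T} {1..length T}" "i \<in> {1..length T}" "\<sigma> i \<noteq> 1"
  obtains j where "j \<in> {1..length T}" "\<sigma> j < \<sigma> i" "rlce T j i = LPF T \<sigma> i"
proof -
  obtain j0 where "j0 \<in> {1..length T}" "\<sigma> j0 = 1"
    using assms bij_betw_imp_surj_on by (metis atLeastAtMost_iff imageE le_numeral_extra(4) order_trans)
  moreover have "\<sigma> i \<ge> 1" using assms bij_betwE by fastforce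
  ultimately have "{rlce T j i | j. j \<in> {1..length T} \<and> \<sigma> j < \<sigma> i} \<noteq> {}"
    using assms(3) by fastforce
  from Max_in[OF _ this]
  have "LPF T \<sigma> i \<in> {rlce T j i | j. j \<in> {1..length T} \<and> \<sigma> j < \<sigma> i}"
    unfolding LPF_def using assms(3) by simp
  then show ?thesis using that by force
qed

lemma LPF_bound:
  assumes "is_text T" "bij_betw \<sigma> {1..length T} {1..length T}" "i \<in> {1..length T}"
  shows "i + LPF T \<sigma> i \<le> length T"
proof (cases "\<sigma> i = 1")
  case False
  then obtain j where "j \<in> {1..length T}" "\<sigma> j < \<sigma> i" "rlce T j i = LPF T \<sigma> i"
    using assms LPF_attained by blast
  then show ?thesis using rlce_bound[OF assms(1) _ assms(3)] by (metis less_irrefl)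
qed (use assms in \<open>simp add: LPF_def\<close>)

lemma PDA_eq_image: "PDA T \<sigma> = (\<lambda>i. i + LPF T \<sigma> i) ` {1..length T}"
  unfolding PDA_def by auto

section \<open>Rankings with the LF property\<close>

locale lf_ranking =
  fixes T :: "nat list" and \<sigma> :: "nat \<Rightarrow> nat"
  assumes is_text_T: "is_text T"
    and bij: "bij_betw \<sigma> {1..length T} {1..length T}"
    and less_iff_cyc_pred: "\<lbrakk>a \<in> {1..length T}; b \<in> {1..length T}; T ! (a - 1) = T ! (b - 1)\<rbrakk>
      \<Longrightarrow> \<sigma> a < \<sigma> b \<longleftrightarrow> \<sigma> (cyc_pred (length T) a) < \<sigma> (cyc_pred (length T) b)"
    and letter_between: "\<lbrakk>a \<in> {1..length T}; b \<in> {1..length T}; x \<in> {1..length T};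
      \<sigma> a \<le> \<sigma> x; \<sigma> x \<le> \<sigma> b; T ! (a - 1) = T ! (b - 1)\<rbrakk> \<Longrightarrow> T ! (x - 1) = T ! (a - 1)"
begin

abbreviation n :: nat where "n \<equiv> length T"

lemma rank_in: "x \<in> {1..n} \<Longrightarrow> \<sigma> x \<in> {1..n}"
  using bij bij_betwE by blast

lemma rank_eq_iff: "x \<in> {1..n} \<Longrightarrow> y \<in> {1..n} \<Longrightarrow> \<sigma> x = \<sigma> y \<longleftrightarrow> x = y"
  using bij bij_betw_imp_inj_on inj_on_eq_iff by metis

lemma rank_surj:
  assumes "r \<in> {1..n}"
  obtains x where "x \<in> {1..n}" "\<sigma> x = r"
  using assms bij bij_betw_imp_surj_on by (metis imageE)

lemma order_preserving: "order_preserving T \<sigma>"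
  unfolding order_preserving_def
proof (intro conjI bij ballI impI)
  fix i j assume "i \<in> {1..n - 1}" "j \<in> {1..n - 1}" "\<sigma> i < \<sigma> j \<and> T ! (i - 1) = T ! (j - 1) \<and> T ! i = T ! j"
  then show "\<sigma> (i + 1) < \<sigma> (j + 1)"
    using less_iff_cyc_pred[of "i + 1" "j + 1"] by (auto simp: cyc_pred_def)
qed

lemma reversed: "lf_ranking T (\<lambda>i. n - \<sigma> i + 1)"
proof
  show "is_text T" by (rule is_text_T)
  have "bij_betw (\<lambda>r. n - r + 1) {1..n} {1..n}"
    by (rule bij_betw_byWitness[where f' = "\<lambda>r. n - r + 1"]) auto
  then show "bij_betw (\<lambda>i. n - \<sigma> i + 1) {1..n} {1..n}"
    using bij bij_betw_trans[of \<sigma>] by (simp add: comp_def)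
next
  fix a b assume "a \<in> {1..n}" "b \<in> {1..n}" "T ! (a - 1) = T ! (b - 1)"
  moreover have "cyc_pred n a \<in> {1..n}" "cyc_pred n b \<in> {1..n}"
    using \<open>a \<in> {1..n}\<close> \<open>b \<in> {1..n}\<close> cyc_pred_in by blast+
  ultimately show "n - \<sigma> a + 1 < n - \<sigma> b + 1
      \<longleftrightarrow> n - \<sigma> (cyc_pred n a) + 1 < n - \<sigma> (cyc_pred n b) + 1"
    using less_iff_cyc_pred[of b a] rank_in by (fastforce simp: less_diff_conv2 le_diff_conv2)
next
  fix a b x assume "a \<in> {1..n}" "b \<in> {1..n}" "x \<in> {1..n}"
    "n - \<sigma> a + 1 \<le> n - \<sigma> x + 1" "n - \<sigma> x + 1 \<le> n - \<sigma> b + 1" "T ! (a - 1) = T ! (b - 1)"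
  then show "T ! (x - 1) = T ! (a - 1)"
    using letter_between[of b a x] rank_in by fastforce
qed

lemma rank_less_shift:
  assumes "j \<ge> 1" "i \<ge> 1" "j + m \<le> n" "i + m \<le> n" "\<sigma> j < \<sigma> i"
    and "\<forall>t\<le>m. T ! (j - 1 + t) = T ! (i - 1 + t)"
  shows "\<sigma> (j + m) < \<sigma> (i + m)"
  using assms
proof (induction m)
  case (Suc m)
  have "\<sigma> (j + m) < \<sigma> (i + m)" using Suc by auto
  moreover have "T ! (j + Suc m - 1) = T ! (i + Suc m - 1)"
    using Suc.prems(1,2,6) spec[OF Suc.prems(6), of "Suc m"] by simp
  ultimately show ?case
    using Suc.prems less_iff_cyc_pred[of "j + Suc m" "i + Suc m"] by (simp add: cyc_pred_def)
qed simp

lemma rank_le_cyc_pred: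
  assumes "a \<in> {1..n}" "x \<in> {1..n}" "T ! (a - 1) = T ! (x - 1)" "\<sigma> a \<le> \<sigma> x"
  shows "\<sigma> (cyc_pred n a) \<le> \<sigma> (cyc_pred n x)"
proof (cases "a = x")
  case False
  then have "\<sigma> a < \<sigma> x" using assms rank_eq_iff le_neq_implies_less by blast
  then show ?thesis using assms less_iff_cyc_pred by fastforce
qed simp

lemma rank_between_pred:
  assumes a: "a \<in> {2..n}" and b: "b \<in> {2..n}" and x: "x \<in> {1..n}"
    and "\<sigma> a \<le> \<sigma> x" "\<sigma> x \<le> \<sigma> b" "T ! (a - 1) = T ! (b - 1)" "T ! (a - 2) = T ! (b - 2)"
  shows "x \<ge> 2 \<and> \<sigma> (a - 1) \<le> \<sigma> (x - 1) \<and> \<sigma> (x - 1) \<le> \<sigma> (b - 1)"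
proof -
  have "T ! (x - 1) = T ! (a - 1)" using assms letter_between[of a b x] by simp
  then have "\<sigma> (cyc_pred n a) \<le> \<sigma> (cyc_pred n x)" "\<sigma> (cyc_pred n x) \<le> \<sigma> (cyc_pred n b)"
    using assms rank_le_cyc_pred[of a x] rank_le_cyc_pred[of x b] by simp_all
  moreover have "cyc_pred n a = a - 1" "cyc_pred n b = b - 1"
    using a b by (simp_all add: cyc_pred_def)
  moreover have "x \<noteq> 1"
  proof
    assume "x = 1"
    then have "\<sigma> (a - 1) \<le> \<sigma> n" "\<sigma> n \<le> \<sigma> (b - 1)"
      using calculation by (simp_all add: cyc_pred_def)
    moreover have "a - 1 \<in> {1..n}" "b - 1 \<in> {1..n}" "n \<in> {1..n}" using a b by auto
    ultimately have "T ! (n - 1) = T ! (a - 2)"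
      using assms(7) letter_between[of "a - 1" "b - 1" n] by (simp add: numeral_2_eq_2)
    moreover have "a - 2 < n - 1" using a by auto
    ultimately show False using text_nth_gt_last[OF is_text_T] by (metis less_irrefl)
  qed
  ultimately show ?thesis using x by (simp add: cyc_pred_def)
qed

lemma rank_between_shift:
  assumes "a \<ge> 1" "b \<ge> 1" "a + m \<le> n" "b + m \<le> n" "x \<in> {1..n}"
    and "\<forall>t\<le>m. T ! (a - 1 + t) = T ! (b - 1 + t)" "\<sigma> (a + m) \<le> \<sigma> x" "\<sigma> x \<le> \<sigma> (b + m)"
  shows "m < x \<and> \<sigma> a \<le> \<sigma> (x - m) \<and> \<sigma> (x - m) \<le> \<sigma> b \<and> (\<forall>t\<le>m. T ! (x - m - 1 + t) = T ! (a - 1 + t))"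
  using assms
proof (induction m arbitrary: x)
  case 0
  then show ?case using letter_between[of a b x] by auto
next
  case (Suc m)
  have "T ! (a + Suc m - 1) = T ! (b + Suc m - 1)" "T ! (a + Suc m - 2) = T ! (b + Suc m - 2)"
    using Suc.prems(6) spec[OF Suc.prems(6), of "Suc m"] spec[OF Suc.prems(6), of m] Suc.prems(1,2)
    by (simp_all add: numeral_2_eq_2)
  then have "x \<ge> 2" "\<sigma> (a + m) \<le> \<sigma> (x - 1)" "\<sigma> (x - 1) \<le> \<sigma> (b + m)"
    using Suc.prems rank_between_pred[of "a + Suc m" "b + Suc m" x] by auto
  then have IH: "m < x - 1 \<and> \<sigma> a \<le> \<sigma> (x - 1 - m) \<and> \<sigma> (x - 1 - m) \<le> \<sigma> b
      \<and> (\<forall>t\<le>m. T ! (x - 1 - m - 1 + t) = T ! (a - 1 + t))"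
    using Suc.prems by (intro Suc.IH) auto
  moreover have "T ! (x - 1) = T ! (a + m)"
    using Suc.prems letter_between[of "a + Suc m" "b + Suc m" x] spec[OF Suc.prems(6), of "Suc m"] by auto
  ultimately show ?case
    using Suc.prems(1) by (auto simp: le_Suc_eq numeral_2_eq_2 Suc_diff_Suc)
qed

lemma LPF_maximal:
  assumes "i \<in> {1..n}" "j \<in> {1..n}" "\<sigma> j < \<sigma> i" "j + LPF T \<sigma> i \<le> n" "i + LPF T \<sigma> i \<le> n"
    and "\<forall>t\<le>LPF T \<sigma> i. T ! (j - 1 + t) = T ! (i - 1 + t)"
  shows False
proof -
  have "Suc (LPF T \<sigma> i) \<le> rlce T j i" using assms by (intro le_rlce) auto
  then show False using rlce_le_LPF[OF bij assms(2,3)] by simp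
qed

lemma PDA_subset: "PDA T \<sigma> \<subseteq> {1..n}"
  using LPF_bound[OF is_text_T bij] by (auto simp: PDA_eq_image)

lemma PDA_letter_differs_LPF_0:
  assumes i: "i \<in> {1..n}" and "LPF T \<sigma> i = 0"
    and k: "k \<in> {1..n}" and rank_k: "\<sigma> k + 1 = \<sigma> (cyc_pred n i)"
  shows "T ! (k mod n) \<noteq> T ! (i - 1)"
proof
  assume same: "T ! (k mod n) = T ! (i - 1)"
  define k' where "k' = k mod n + 1"
  have "k mod n < n" using k by (intro mod_less_divisor) auto
  have k': "k' \<in> {1..n}" "cyc_pred n k' = k" "T ! (k' - 1) = T ! (i - 1)"
    using \<open>k mod n < n\<close> same cyc_pred_Suc_mod[OF k] by (auto simp: k'_def)
  then have "\<sigma> k' < \<sigma> i" using less_iff_cyc_pred[OF k'(1) i] rank_k by simp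
  then show False using LPF_maximal[OF i k'(1)] k' i assms(2) by simp
qed

lemma PDA_letter_differs_LPF_Suc:
  assumes i: "i \<in> {1..n}" and LPF_i: "LPF T \<sigma> i = Suc m"
    and k: "k \<in> {1..n}" and rank_k: "\<sigma> k + 1 = \<sigma> (i + m)"
  shows "T ! (k mod n) \<noteq> T ! (i + m)"
proof
  assume same: "T ! (k mod n) = T ! (i + m)"
  have "i + Suc m \<le> n" using LPF_bound[OF is_text_T bij i] LPF_i by simp
  have "\<sigma> i \<noteq> 1" using LPF_i by (auto simp: LPF_def)
  then obtain j where j: "j \<in> {1..n}" "\<sigma> j < \<sigma> i" "rlce T j i = Suc m"
    using LPF_attained[OF bij i] LPF_i by metis
  then have "j + m \<le> n" and shared_ji: "\<forall>t\<le>m. T ! (j - 1 + t) = T ! (i - 1 + t)"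
    using nth_eq_if_less_rlce[of j i _ T] i by (simp_all add: less_Suc_eq_le)
  then have "\<sigma> (j + m) < \<sigma> (i + m)"
    using j i \<open>i + Suc m \<le> n\<close> by (intro rank_less_shift) auto
  then have "\<sigma> (j + m) \<le> \<sigma> k" "\<sigma> k \<le> \<sigma> (i + m)" using rank_k by auto
  then have "m < k" "\<sigma> j \<le> \<sigma> (k - m)" "\<sigma> (k - m) \<le> \<sigma> i"
    and shared: "\<forall>t\<le>m. T ! (k - m - 1 + t) = T ! (j - 1 + t)"
    using rank_between_shift[OF _ _ \<open>j + m \<le> n\<close> _ k shared_ji] i j \<open>i + Suc m \<le> n\<close> by auto
  have "k \<noteq> n"
  proof
    assume "k = n"
    then have "T ! (n - 1) = T ! (i - 1 + m)"
      using spec[OF shared, of m] spec[OF shared_ji, of m] \<open>m < k\<close> by simp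
    moreover have "i - 1 + m < n - 1" using \<open>i + Suc m \<le> n\<close> i by auto
    ultimately show False using text_nth_gt_last[OF is_text_T] by (metis less_irrefl)
  qed
  have j': "k - m \<in> {1..n}" using \<open>m < k\<close> k by auto
  have "k - m \<noteq> i" using \<open>m < k\<close> rank_k by auto
  then have "\<sigma> (k - m) < \<sigma> i" using \<open>\<sigma> (k - m) \<le> \<sigma> i\<close> rank_eq_iff[OF j' i] by auto
  moreover have "\<forall>t\<le>Suc m. T ! (k - m - 1 + t) = T ! (i - 1 + t)"
    using shared shared_ji same \<open>k \<noteq> n\<close> \<open>m < k\<close> k i by (auto simp: le_Suc_eq)
  ultimately show False
    using LPF_maximal[OF i j'] LPF_i \<open>k \<noteq> n\<close> k \<open>m < k\<close> \<open>i + Suc m \<le> n\<close> by simp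
qed

lemma PDA_letter_differs:
  assumes p: "p \<in> PDA T \<sigma>" and k: "k \<in> {1..n}" and rank_k: "\<sigma> k + 1 = \<sigma> (cyc_pred n p)"
  shows "T ! (k mod n) \<noteq> T ! (p - 1)"
proof -
  obtain i where i: "i \<in> {1..n}" and p_eq: "p = i + LPF T \<sigma> i"
    using p by (auto simp: PDA_eq_image)
  show ?thesis
  proof (cases "LPF T \<sigma> i")
    case 0
    then show ?thesis using PDA_letter_differs_LPF_0[OF i _ k] rank_k p_eq by simp
  next
    case (Suc m)
    then show ?thesis using PDA_letter_differs_LPF_Suc[OF i Suc k] rank_k p_eq i by (simp add: cyc_pred_def)
  qed
qed

lemma card_PDA_le:
  assumes len: "length xs = n" and xs: "\<And>j. j \<in> {1..n} \<Longrightarrow> xs ! (\<sigma> j - 1) = T ! (j mod n)"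
  shows "card (PDA T \<sigma>) \<le> length (remdups_adj xs)"
proof -
  let ?head = "\<lambda>p. \<sigma> (cyc_pred n p) - 1"
  have "inj_on ?head (PDA T \<sigma>)"
  proof (rule inj_onI)
    fix p q assume "p \<in> PDA T \<sigma>" "q \<in> PDA T \<sigma>" "?head p = ?head q"
    moreover from this have p: "p \<in> {1..n}" and q: "q \<in> {1..n}" using PDA_subset by auto
    ultimately have "\<sigma> (cyc_pred n p) = \<sigma> (cyc_pred n q)"
      using rank_in[OF cyc_pred_in[OF p]] rank_in[OF cyc_pred_in[OF q]] by auto
    then show "p = q"
      using rank_eq_iff[OF cyc_pred_in[OF p] cyc_pred_in[OF q]] cyc_pred_eq_iff[OF p q] by simp
  qed
  moreover have "?head ` PDA T \<sigma> \<subseteq> run_heads xs"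
  proof
    fix r assume "r \<in> ?head ` PDA T \<sigma>"
    then obtain p where p: "p \<in> PDA T \<sigma>" and r: "r = ?head p" by blast
    have "p \<in> {1..n}" using p PDA_subset by blast
    then have p_in: "cyc_pred n p \<in> {1..n}" by (rule cyc_pred_in)
    have "xs ! r = T ! (cyc_pred n p mod n)" using xs[OF p_in] r by simp
    also have "\<dots> = T ! (p - 1)" using cyc_pred_mod[OF \<open>p \<in> {1..n}\<close>] by simp
    finally have xs_r: "xs ! r = T ! (p - 1)" .
    have "r < length xs" using r rank_in[OF p_in] len by auto
    moreover have "xs ! (r - 1) \<noteq> xs ! r" if "r \<noteq> 0"
    proof -
      have "r \<in> {1..n}" using that \<open>r < length xs\<close> len by auto
      then obtain k where k: "k \<in> {1..n}" "\<sigma> k = r" by (rule rank_surj)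
      then have "\<sigma> k + 1 = \<sigma> (cyc_pred n p)" using r rank_in[OF p_in] by auto
      then show ?thesis using PDA_letter_differs[OF p k(1)] xs[OF k(1)] xs_r k(2) by simp
    qed
    ultimately show "r \<in> run_heads xs" by (auto simp: run_heads_def)
  qed
  ultimately have "card (PDA T \<sigma>) \<le> card (run_heads xs)"
    by (intro card_inj_on_le) (auto simp: run_heads_def)
  then show ?thesis by (simp add: card_run_heads)
qed

lemma card_PDA_reversed_le:
  assumes "length xs = n" and "\<And>j. j \<in> {1..n} \<Longrightarrow> xs ! (\<sigma> j - 1) = T ! (j mod n)"
  shows "card (PDA T (\<lambda>i. n - \<sigma> i + 1)) \<le> length (remdups_adj xs)"
proof -
  have "rev xs ! (n - \<sigma> j + 1 - 1) = T ! (j mod n)" if "j \<in> {1..n}" for j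
    using assms(1) assms(2)[OF that] rank_in[OF that] by (auto simp: rev_nth Suc_diff_le)
  then have "card (PDA T (\<lambda>i. n - \<sigma> i + 1)) \<le> length (remdups_adj (rev xs))"
    using lf_ranking.card_PDA_le[OF reversed, of "rev xs"] assms(1) by simp
  then show ?thesis by simp
qed

end

lemma lf_ranking_IPA:
  assumes "is_text T"
  shows "lf_ranking T (IPA T)"
proof
  show "is_text T" by (fact assms)
  show "bij_betw (IPA T) {1..length T} {1..length T}" by (fact bij_betw_IPA)
qed (fact IPA_less_iff_cyc_pred[OF assms], fact IPA_letter_between)

theorem lemma43:
  fixes T :: "nat list"
  assumes "is_text T"
  shows "order_preserving T (IPA T)
       \<and> order_preserving T (\<lambda>i. length T - IPA T i + 1)
       \<and> card (st_colex_minus T) \<le> rbar T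
       \<and> card (st_colex_plus T) \<le> rbar T"
proof -
  interpret lf_ranking T "IPA T" using assms by (rule lf_ranking_IPA)
  have "card (st_colex_minus T) \<le> rbar T" "card (st_colex_plus T) \<le> rbar T"
    unfolding st_colex_minus_def st_colex_plus_def rbar_def
    using card_PDA_le card_PDA_reversed_le length_coBWT coBWT_nth_IPA[OF assms] by blast+
  then show ?thesis
    using order_preserving lf_ranking.order_preserving[OF reversed] by blast
qed

end
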